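(* Let $A,B$ be finite sets with $\#B\ge 2$ and $\#A\ge 16\,\#B$. Let $\varepsilon$ and $\Phi$ be numbers with $\varepsilon\ge 4\#B/\#A$ and $1\le\Phi\le 2^{\#A/(4\#B)}$. Then there exists a family $\mathcal C$ of functions $A\to B$ of cardinality $$\left\lceil\max\left\{\frac{20\,\#B}{\varepsilon},\ \frac{6\Phi\log_2(\#B)}{\varepsilon},\ 6\Phi\cdot\#B\cdot\log_2(\#B)\right\}\right\rceil$$ with the following property: for every family $\mathcal F$ of functions $A\to B$ with $\#\mathcal F\le\Phi$ and every mapping $\mathfrak H$ assigning to each $b\in B$ a set $\mathfrak H(b)$ of functions $A\to B$ with $\#(\mathfrak H(b)\cap\mathcal C)\le \tfrac14\#\mathcal C$ for every $b\in B$, the number of pairs $\langle a,b\rangle\in A\times B$ that are not covered by any $c\in\mathcal C$ (with respect to $\mathcal F$ and $\mathfrak H$) is at most $\varepsilon\cdot\#A\cdot\#B$.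
   Context: A family $\mathcal F$ of functions $A\to B$ rejects a function $c\colon A\to B$ if there exists $f\in\mathcal F$ such that $\#\{x\in A: c(x)=f(x)\}\ge 4\#A/\#B$. Given $\mathcal F$ and a mapping $\mathfrak H$ from $B$ to sets of functions $A\to B$, a function $c\colon A\to B$ covers the pair $\langle a,b\rangle\in A\times B$ if (1) $c(a)=b$, (2) $c$ is not rejected by $\mathcal F$, and (3) $c\notin\mathfrak H(b)$. *)

theory Defs
  imports Complex_Main "HOL-Library.FuncSet"
begin

text \<open>Functions A to B are modelled as extensional functions, i.e. elements of PiE A (lambda _. B).\<close>

definition rejects :: "'a set \<Rightarrow> 'b set \<Rightarrow> ('a \<Rightarrow> 'b) set \<Rightarrow> ('a \<Rightarrow> 'b) \<Rightarrow> bool" where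
  "rejects A B F c \<longleftrightarrow>
     (\<exists>f\<in>F. real (card {x\<in>A. c x = f x}) \<ge> 4 * real (card A) / real (card B))"

definition covers :: "'a set \<Rightarrow> 'b set \<Rightarrow> ('a \<Rightarrow> 'b) set \<Rightarrow> ('b \<Rightarrow> ('a \<Rightarrow> 'b) set)
                       \<Rightarrow> ('a \<Rightarrow> 'b) \<Rightarrow> 'a \<Rightarrow> 'b \<Rightarrow> bool" where
  "covers A B F H c a b \<longleftrightarrow> c a = b \<and> \<not> rejects A B F c \<and> c \<notin> H b"

end

theory Submission
  imports Defs "HOL-Analysis.Harmonic_Numbers"
begin

text \<open>
  Let n = #A and m = #B.  The family C is obtained by the probabilistic method: we choose a
  sequence w of k functions A -> B (k the size prescribed by the theorem) and show, by counting,
  that fewer than all sequences have one of three defects: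
    (1) two entries of w coincide;
    (2) some function f agrees with at least L entries of w on at least T = ceil(4n/m) points;
    (3) for some value b and some set U of u points, at least s entries of w avoid b on all of U.
  A sequence without these defects has k distinct entries, and its image C covers all but
  at most eps * n * m pairs: by (2) the at most Phi functions in F reject at most k/4 members
  of C, so for every b at least half of C is admissible, and by (3) the admissible members hit b
  everywhere except on fewer than u <= eps * n + 1 points.
\<close>

subsection \<open>Counting functions and sequences of functions\<close>

lemma card_functions: "finite A \<Longrightarrow> card (A \<rightarrow>\<^sub>E B) = card B ^ card A"
  by (simp add: card_PiE)

lemma card_PiE_restrict:
  assumes "finite A" and "S \<subseteq> A" and "\<forall>x\<in>S. R x \<subseteq> B"
  shows "card {c \<in> A \<rightarrow>\<^sub>E B. \<forall>x\<in>S. c x \<in> R x}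
         = (\<Prod>x\<in>S. card (R x)) * card B ^ (card A - card S)"
proof -
  have "{c \<in> A \<rightarrow>\<^sub>E B. \<forall>x\<in>S. c x \<in> R x} = PiE A (\<lambda>x. if x \<in> S then R x else B)"
    using assms by (auto simp: PiE_def Pi_def split: if_splits)
  then have "card {c \<in> A \<rightarrow>\<^sub>E B. \<forall>x\<in>S. c x \<in> R x} = (\<Prod>x\<in>A. if x \<in> S then card (R x) else card B)"
    using assms(1) by (simp add: card_PiE if_distrib)
  also have "\<dots> = (\<Prod>x\<in>S. card (R x)) * (\<Prod>x\<in>A - S. card B)"
    using assms(1,2) by (simp add: prod.If_cases Int_absorb1 Diff_eq)
  also have "(\<Prod>x\<in>A - S. card B) = card B ^ (card A - card S)"
    using assms(1,2) by (simp add: card_Diff_subset finite_subset)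
  finally show ?thesis .
qed

text \<open>A sequence of length k with entries in P is a function in {..<k} ->E P.
  It hits Q at least L times if some L of its positions carry an element of Q.\<close>

definition hits :: "nat \<Rightarrow> nat \<Rightarrow> 'p set \<Rightarrow> (nat \<Rightarrow> 'p) \<Rightarrow> bool" where
  "hits k L Q w \<longleftrightarrow> (\<exists>I. I \<subseteq> {..<k} \<and> card I = L \<and> (\<forall>i\<in>I. w i \<in> Q))"

text \<open>Union bound over the L-element sets of positions.\<close>

lemma card_hits_le:
  assumes "finite P" and "Q \<subseteq> P"
  shows "card {w \<in> {..<k} \<rightarrow>\<^sub>E P. hits k L Q w} \<le> (k choose L) * card Q ^ L * card P ^ (k - L)"
proof -
  let ?Is = "{I. I \<subseteq> {..<k} \<and> card I = L}"
  have "{w \<in> {..<k} \<rightarrow>\<^sub>E P. hits k L Q w} = (\<Union>I\<in>?Is. {w \<in> {..<k} \<rightarrow>\<^sub>E P. \<forall>i\<in>I. w i \<in> Q})"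
    unfolding hits_def by blast
  then have "card {w \<in> {..<k} \<rightarrow>\<^sub>E P. hits k L Q w}
      \<le> (\<Sum>I\<in>?Is. card {w \<in> {..<k} \<rightarrow>\<^sub>E P. \<forall>i\<in>I. w i \<in> Q})"
    by (simp add: card_UN_le)
  also have "\<dots> = (\<Sum>I\<in>?Is. card Q ^ L * card P ^ (k - L))"
    using card_PiE_restrict[of "{..<k}" _ "\<lambda>_. Q" P] assms(2) by (intro sum.cong) auto
  also have "\<dots> = (k choose L) * card Q ^ L * card P ^ (k - L)"
    by (simp add: n_subsets)
  finally show ?thesis .
qed

lemma card_image_inter_lt_if_not_hits:
  assumes "inj_on w {..<k}" and "\<not> hits k L Q w"
  shows "card (w ` {..<k} \<inter> Q) < L"
proof (rule ccontr)
  assume "\<not> ?thesis"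
  then have "L \<le> card (w ` {..<k} \<inter> Q)" by simp
  then obtain R where R: "R \<subseteq> w ` {..<k} \<inter> Q" "card R = L"
    by (rule obtain_subset_with_card_n)
  define I where "I = {i \<in> {..<k}. w i \<in> R}"
  have "w ` I = R" using R(1) unfolding I_def by auto
  moreover have "inj_on w I" using assms(1) by (rule inj_on_subset) (auto simp: I_def)
  ultimately have "card I = L" using R(2) card_image by metis
  then have "hits k L Q w" using R(1) unfolding hits_def by (intro exI[of _ I]) (auto simp: I_def)
  then show False using assms(2) by contradiction
qed

lemma card_equal_entries_le:
  assumes "finite P" and "i < k" and "j < k" and "i \<noteq> j"
  shows "card {w \<in> {..<k} \<rightarrow>\<^sub>E P. w i = w j} \<le> card P ^ (k - 1)"
proof -
  have "{w \<in> {..<k} \<rightarrow>\<^sub>E P. w i = w j} = (\<Union>p\<in>P. {w \<in> {..<k} \<rightarrow>\<^sub>E P. \<forall>x\<in>{i, j}. w x \<in> {p}})"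
    using assms(2) by (auto simp: PiE_iff)
  then have "card {w \<in> {..<k} \<rightarrow>\<^sub>E P. w i = w j}
      \<le> (\<Sum>p\<in>P. card {w \<in> {..<k} \<rightarrow>\<^sub>E P. \<forall>x\<in>{i, j}. w x \<in> {p}})"
    by (simp add: card_UN_le assms(1))
  also have "\<dots> = (\<Sum>p\<in>P. card P ^ (k - 2))"
    using card_PiE_restrict[of "{..<k}" "{i, j}" "\<lambda>_. {_}" P] assms(2-4)
    by (intro sum.cong) (auto simp: card_insert_if numeral_2_eq_2)
  also have "\<dots> = card P ^ (k - 1)"
    using assms(2-4) by (simp add: Suc_diff_Suc numeral_2_eq_2 flip: power_Suc)
  finally show ?thesis .
qed

lemma card_non_injective_le:
  assumes "finite P"
  shows "card {w \<in> {..<k} \<rightarrow>\<^sub>E P. \<not> inj_on w {..<k}} \<le> k * k * card P ^ (k - 1)"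
proof -
  have "{w \<in> {..<k} \<rightarrow>\<^sub>E P. \<not> inj_on w {..<k}}
      = (\<Union>i<k. \<Union>j\<in>{..<k} - {i}. {w \<in> {..<k} \<rightarrow>\<^sub>E P. w i = w j})"
    unfolding inj_on_def by auto
  then have "card {w \<in> {..<k} \<rightarrow>\<^sub>E P. \<not> inj_on w {..<k}}
      \<le> (\<Sum>i<k. card (\<Union>j\<in>{..<k} - {i}. {w \<in> {..<k} \<rightarrow>\<^sub>E P. w i = w j}))"
    by (simp add: card_UN_le)
  also have "\<dots> \<le> (\<Sum>i<k. \<Sum>j\<in>{..<k} - {i}. card {w \<in> {..<k} \<rightarrow>\<^sub>E P. w i = w j})"
    by (intro sum_mono card_UN_le) simp
  also have "\<dots> \<le> (\<Sum>i<k. \<Sum>j\<in>{..<k} - {i}. card P ^ (k - 1))"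
    using card_equal_entries_le[OF assms] by (intro sum_mono) auto
  also have "\<dots> \<le> (\<Sum>i<k. k * card P ^ (k - 1))"
    by (intro sum_mono) (simp_all add: card_Diff_subset)
  also have "\<dots> = k * k * card P ^ (k - 1)" by simp
  finally show ?thesis .
qed

subsection \<open>Agreement and avoidance\<close>

definition agreeing :: "'a set \<Rightarrow> 'b set \<Rightarrow> nat \<Rightarrow> ('a \<Rightarrow> 'b) \<Rightarrow> ('a \<Rightarrow> 'b) set" where
  "agreeing A B T f = {c \<in> A \<rightarrow>\<^sub>E B. T \<le> card {x \<in> A. c x = f x}}"

lemma rejects_iff_agreeing:
  assumes "c \<in> A \<rightarrow>\<^sub>E B"
  shows "rejects A B F c \<longleftrightarrow> (\<exists>f\<in>F. c \<in> agreeing A B (nat \<lceil>4 * real (card A) / real (card B)\<rceil>) f)"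
proof -
  have "nat \<lceil>x\<rceil> \<le> N \<longleftrightarrow> x \<le> real N" for x :: real and N :: nat
    by (simp add: nat_le_iff ceiling_le_iff)
  then show ?thesis using assms unfolding rejects_def agreeing_def by auto
qed

text \<open>A function agreeing with f on T points is determined off a T-set chosen among (n choose T).\<close>

lemma card_agreeing_le:
  assumes "finite A" and "finite B" and "f \<in> A \<rightarrow>\<^sub>E B"
  shows "card (agreeing A B T f) \<le> (card A choose T) * card B ^ (card A - T)"
proof -
  let ?Ss = "{S. S \<subseteq> A \<and> card S = T}"
  have "agreeing A B T f \<subseteq> (\<Union>S\<in>?Ss. {c \<in> A \<rightarrow>\<^sub>E B. \<forall>x\<in>S. c x \<in> {f x}})"
  proof
    fix c assume "c \<in> agreeing A B T f"
    then obtain S where "S \<subseteq> {x \<in> A. c x = f x}" "card S = T" "c \<in> A \<rightarrow>\<^sub>E B"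
      unfolding agreeing_def by (auto intro: obtain_subset_with_card_n)
    then show "c \<in> (\<Union>S\<in>?Ss. {c \<in> A \<rightarrow>\<^sub>E B. \<forall>x\<in>S. c x \<in> {f x}})" by auto
  qed
  then have "card (agreeing A B T f) \<le> card (\<Union>S\<in>?Ss. {c \<in> A \<rightarrow>\<^sub>E B. \<forall>x\<in>S. c x \<in> {f x}})"
    using assms by (intro card_mono) (auto simp: finite_PiE)
  also have "\<dots> \<le> (\<Sum>S\<in>?Ss. card {c \<in> A \<rightarrow>\<^sub>E B. \<forall>x\<in>S. c x \<in> {f x}})"
    using assms(1) by (intro card_UN_le) simp
  also have "\<dots> = (\<Sum>S\<in>?Ss. card B ^ (card A - T))"
    using card_PiE_restrict[OF assms(1), of _ "\<lambda>x. {f x}" B] assms(3) by (intro sum.cong) auto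
  also have "\<dots> = (card A choose T) * card B ^ (card A - T)"
    using assms(1) by (simp add: n_subsets)
  finally show ?thesis .
qed

lemma card_avoiding:
  assumes "finite A" and "finite B" and "U \<subseteq> A" and "b \<in> B"
  shows "card {c \<in> A \<rightarrow>\<^sub>E B. \<forall>a\<in>U. c a \<noteq> b} = (card B - 1) ^ card U * card B ^ (card A - card U)"
proof -
  have "{c \<in> A \<rightarrow>\<^sub>E B. \<forall>a\<in>U. c a \<noteq> b} = {c \<in> A \<rightarrow>\<^sub>E B. \<forall>a\<in>U. c a \<in> B - {b}}"
    using assms(3) by (auto simp: PiE_iff)
  then show ?thesis using card_PiE_restrict[OF assms(1,3), of "\<lambda>_. B - {b}" B] assms by simp
qed

subsection \<open>A family without defects covers almost all pairs\<close>

lemma card_pairs_le: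
  fixes N :: real
  assumes "finite A" and "finite B" and "\<forall>b\<in>B. real (card {a \<in> A. P a b}) \<le> N"
  shows "real (card {(a, b) \<in> A \<times> B. P a b}) \<le> real (card B) * N"
proof -
  have swap: "{(a, b) \<in> A \<times> B. P a b} = (\<lambda>(b, a). (a, b)) ` (SIGMA b:B. {a \<in> A. P a b})"
    by auto
  have "card {(a, b) \<in> A \<times> B. P a b} \<le> card (SIGMA b:B. {a \<in> A. P a b})"
    unfolding swap by (rule card_image_le) (simp add: assms(1,2))
  also have "\<dots> = (\<Sum>b\<in>B. card {a \<in> A. P a b})"
    using assms(1,2) by (simp add: card_SigmaI)
  finally have "real (card {(a, b) \<in> A \<times> B. P a b}) \<le> (\<Sum>b\<in>B. real (card {a \<in> A. P a b}))"
    by (simp flip: of_nat_sum)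
  also have "\<dots> \<le> real (card B) * N"
    using sum_mono[of B _ "\<lambda>_. N"] assms(3) by simp
  finally show ?thesis .
qed

lemma few_rejected:
  assumes "finite F" and "finite C" and "C \<subseteq> A \<rightarrow>\<^sub>E B"
    and "T = nat \<lceil>4 * real (card A) / real (card B)\<rceil>"
    and "\<forall>f\<in>F. card (C \<inter> agreeing A B T f) < L" and "1 \<le> L" and "real (card F) \<le> \<Phi>"
  shows "real (card {c \<in> C. rejects A B F c}) \<le> \<Phi> * (real L - 1)"
proof -
  have rejected: "{c \<in> C. rejects A B F c} = (\<Union>f\<in>F. C \<inter> agreeing A B T f)"
    using rejects_iff_agreeing[of _ A B F] assms(3,4) by auto
  have "card {c \<in> C. rejects A B F c} \<le> (\<Sum>f\<in>F. card (C \<inter> agreeing A B T f))"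
    unfolding rejected by (rule card_UN_le[OF assms(1)])
  also have "\<dots> \<le> (\<Sum>f\<in>F. L - 1)"
    using assms(5) by (intro sum_mono) fastforce
  finally have "real (card {c \<in> C. rejects A B F c}) \<le> real (card F * (L - 1))"
    by (simp only: of_nat_le_iff) simp
  also have "\<dots> = real (card F) * (real L - 1)" using assms(6) by (simp add: of_nat_diff)
  also have "\<dots> \<le> \<Phi> * (real L - 1)" using assms(6,7) by (intro mult_right_mono) auto
  finally show ?thesis .
qed

lemma many_admissible:
  assumes "finite C"
    and "real (card {c \<in> C. rejects A B F c}) \<le> real (card C) / 4"
    and "real (card (X \<inter> C)) \<le> real (card C) / 4"
    and "2 * s \<le> card C + 1"
  shows "s \<le> card {c \<in> C. \<not> rejects A B F c \<and> c \<notin> X}"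
proof -
  let ?good = "{c \<in> C. \<not> rejects A B F c \<and> c \<notin> X}" and ?rejected = "{c \<in> C. rejects A B F c}"
  have "C \<subseteq> ?good \<union> ?rejected \<union> (X \<inter> C)" by blast
  then have "card C \<le> card (?good \<union> ?rejected \<union> (X \<inter> C))"
    by (rule card_mono[rotated]) (simp add: assms(1))
  also have "\<dots> \<le> card ?good + card ?rejected + card (X \<inter> C)"
    using card_Un_le[of "?good \<union> ?rejected" "X \<inter> C"] card_Un_le[of ?good ?rejected] by linarith
  finally have "real (card C) \<le> real (card ?good + card ?rejected + card (X \<inter> C))"
    by (simp only: of_nat_le_iff)
  then have "real (card C) / 2 \<le> real (card ?good)" using assms(2,3) by simp
  then show ?thesis using assms(4) by linarith
qed

text \<open>The points a for which the pair (a, b) stays uncovered are avoided by every admissible member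
  of C; if few members of C avoid b on any u points, there are fewer than u such points.\<close>

lemma few_uncovered_in_column:
  assumes "finite C"
    and "\<forall>U. U \<subseteq> A \<longrightarrow> card U = u \<longrightarrow> card {c \<in> C. \<forall>a\<in>U. c a \<noteq> b} < s"
    and "s \<le> card {c \<in> C. \<not> rejects A B F c \<and> c \<notin> H b}"
  shows "card {a \<in> A. \<not> (\<exists>c\<in>C. covers A B F H c a b)} < u"
proof (rule ccontr)
  assume "\<not> ?thesis"
  then have "u \<le> card {a \<in> A. \<not> (\<exists>c\<in>C. covers A B F H c a b)}" by simp
  then obtain U where U: "U \<subseteq> {a \<in> A. \<not> (\<exists>c\<in>C. covers A B F H c a b)}" "card U = u"
    by (rule obtain_subset_with_card_n)
  have avoids: "c a \<noteq> b" if "c \<in> C" "\<not> rejects A B F c" "c \<notin> H b" "a \<in> U" for c a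
  proof
    assume "c a = b"
    then have "covers A B F H c a b" using that(2,3) unfolding covers_def by simp
    then show False using subsetD[OF U(1) \<open>a \<in> U\<close>] \<open>c \<in> C\<close> by auto
  qed
  then have "{c \<in> C. \<not> rejects A B F c \<and> c \<notin> H b} \<subseteq> {c \<in> C. \<forall>a\<in>U. c a \<noteq> b}"
    by blast
  then have "card {c \<in> C. \<not> rejects A B F c \<and> c \<notin> H b} \<le> card {c \<in> C. \<forall>a\<in>U. c a \<noteq> b}"
    by (rule card_mono[rotated]) (simp add: assms(1))
  then have "s \<le> card {c \<in> C. \<forall>a\<in>U. c a \<noteq> b}" using assms(3) by linarith
  moreover have "U \<subseteq> A" using U(1) by auto
  then have "card {c \<in> C. \<forall>a\<in>U. c a \<noteq> b} < s" using assms(2) U(2) by blast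
  ultimately show False by linarith
qed

text \<open>The deterministic core: a family C without the defects (2) and (3) leaves at most
  eps * n * m pairs uncovered.\<close>

lemma covering_family:
  fixes C :: "('a \<Rightarrow> 'b) set" and \<Phi> \<epsilon> :: real
  assumes "finite A" and "finite B" and "C \<subseteq> A \<rightarrow>\<^sub>E B"
    and "T = nat \<lceil>4 * real (card A) / real (card B)\<rceil>"
    and rare: "\<forall>f\<in>A \<rightarrow>\<^sub>E B. card (C \<inter> agreeing A B T f) < L"
    and avoid: "\<forall>b\<in>B. \<forall>U. U \<subseteq> A \<longrightarrow> card U = u \<longrightarrow> card {c \<in> C. \<forall>a\<in>U. c a \<noteq> b} < s"
    and L: "1 \<le> L" "\<Phi> * (real L - 1) \<le> real (card C) / 4"
    and s: "2 * s \<le> card C + 1"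
    and u: "real u - 1 \<le> \<epsilon> * real (card A)"
    and F: "F \<subseteq> A \<rightarrow>\<^sub>E B" "real (card F) \<le> \<Phi>"
    and H: "\<forall>b\<in>B. real (card (H b \<inter> C)) \<le> real (card C) / 4"
  shows "real (card {(a, b) \<in> A \<times> B. \<not> (\<exists>c\<in>C. covers A B F H c a b)})
           \<le> \<epsilon> * real (card A) * real (card B)"
proof -
  have "finite C" using finite_subset[OF assms(3)] assms(1,2) by (simp add: finite_PiE)
  have "finite F" using F(1) by (rule finite_subset) (simp add: finite_PiE assms(1,2))
  moreover have "\<forall>f\<in>F. card (C \<inter> agreeing A B T f) < L" using rare F(1) by blast
  ultimately have rejected: "real (card {c \<in> C. rejects A B F c}) \<le> real (card C) / 4"
    using few_rejected[OF _ \<open>finite C\<close> assms(3,4) _ L(1) F(2)] L(2) by fastforce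
  have "real (card {a \<in> A. \<not> (\<exists>c\<in>C. covers A B F H c a b)}) \<le> \<epsilon> * real (card A)"
    if "b \<in> B" for b
  proof -
    have "s \<le> card {c \<in> C. \<not> rejects A B F c \<and> c \<notin> H b}"
      using many_admissible[OF \<open>finite C\<close> rejected bspec[OF H that] s] .
    then have "card {a \<in> A. \<not> (\<exists>c\<in>C. covers A B F H c a b)} < u"
      using few_uncovered_in_column[OF \<open>finite C\<close>] avoid that by blast
    then show ?thesis using u by linarith
  qed
  then have "real (card {(a, b) \<in> A \<times> B. \<not> (\<exists>c\<in>C. covers A B F H c a b)})
      \<le> real (card B) * (\<epsilon> * real (card A))"
    by (intro card_pairs_le[OF assms(1,2)]) blast
  then show ?thesis by (simp add: mult_ac)
qed

subsection \<open>Union bound over sequences of functions\<close>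

text \<open>Two algebraic identities that turn the counts below into proportions of all sequences;
  they hold trivially when the binomial coefficient vanishes.\<close>

lemma choose_mult_pow_diff:
  fixes x :: real
  assumes "x \<noteq> 0"
  shows "real (N choose j) * x ^ (N - j) = real (N choose j) / x ^ j * x ^ N"
  using assms by (cases "j \<le> N") (simp_all add: power_diff binomial_eq_0)

lemma choose_mult_pow_split:
  fixes y M :: real
  assumes "M \<noteq> 0"
  shows "real (k choose L) * (y * M) ^ L * M ^ (k - L) = real (k choose L) * y ^ L * M ^ k"
proof (cases "L \<le> k")
  case True
  then have "M ^ L * M ^ (k - L) = M ^ k" by (simp flip: power_add)
  then show ?thesis by (simp add: power_mult_distrib mult_ac)
qed simp

text \<open>Union bound for defect (2).\<close>

lemma card_agreeing_sequences_le:
  fixes A :: "'a set" and B :: "'b set"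
  defines "P \<equiv> A \<rightarrow>\<^sub>E B"
  assumes "finite A" and "finite B"
  shows "card {w \<in> {..<k} \<rightarrow>\<^sub>E P. \<exists>f\<in>P. hits k L (agreeing A B T f) w}
    \<le> card P * ((k choose L) * ((card A choose T) * card B ^ (card A - T)) ^ L * card P ^ (k - L))"
proof -
  have fin: "finite P" unfolding P_def using assms(2,3) by (simp add: finite_PiE)
  have "card {w \<in> {..<k} \<rightarrow>\<^sub>E P. \<exists>f\<in>P. hits k L (agreeing A B T f) w}
      = card (\<Union>f\<in>P. {w \<in> {..<k} \<rightarrow>\<^sub>E P. hits k L (agreeing A B T f) w})"
    by (rule arg_cong[where f = card]) blast
  also have "\<dots> \<le> (\<Sum>f\<in>P. card {w \<in> {..<k} \<rightarrow>\<^sub>E P. hits k L (agreeing A B T f) w})"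
    by (rule card_UN_le[OF fin])
  also have "\<dots> \<le> (\<Sum>f\<in>P. (k choose L) * ((card A choose T) * card B ^ (card A - T)) ^ L * card P ^ (k - L))"
  proof (intro sum_mono)
    fix f assume f: "f \<in> P"
    have "agreeing A B T f \<subseteq> P" unfolding agreeing_def P_def by blast
    then have "card {w \<in> {..<k} \<rightarrow>\<^sub>E P. hits k L (agreeing A B T f) w}
        \<le> (k choose L) * card (agreeing A B T f) ^ L * card P ^ (k - L)"
      by (rule card_hits_le[OF fin])
    also have "\<dots> \<le> (k choose L) * ((card A choose T) * card B ^ (card A - T)) ^ L * card P ^ (k - L)"
      using card_agreeing_le[OF assms(2,3) f[unfolded P_def]] by (intro mult_mono power_mono) auto
    finally show "card {w \<in> {..<k} \<rightarrow>\<^sub>E P. hits k L (agreeing A B T f) w}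
        \<le> (k choose L) * ((card A choose T) * card B ^ (card A - T)) ^ L * card P ^ (k - L)" .
  qed
  finally show ?thesis by simp
qed

lemma agreeing_sequences_fraction:
  fixes A :: "'a set" and B :: "'b set"
  defines "M \<equiv> real (card B) ^ card A"
  assumes "finite A" and "finite B" and "B \<noteq> {}"
  shows "real (card {w \<in> {..<k} \<rightarrow>\<^sub>E (A \<rightarrow>\<^sub>E B). \<exists>f\<in>A \<rightarrow>\<^sub>E B. hits k L (agreeing A B T f) w})
    \<le> M * real (k choose L) * (real (card A choose T) / real (card B) ^ T) ^ L * M ^ k"
proof -
  have m: "real (card B) \<noteq> 0" using assms(3,4) by auto
  then have M: "M \<noteq> 0" unfolding M_def by simp
  have "real (card {w \<in> {..<k} \<rightarrow>\<^sub>E (A \<rightarrow>\<^sub>E B). \<exists>f\<in>A \<rightarrow>\<^sub>E B. hits k L (agreeing A B T f) w})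
      \<le> M * (real (k choose L) * (real (card A choose T) * real (card B) ^ (card A - T)) ^ L * M ^ (k - L))"
    using of_nat_mono[OF card_agreeing_sequences_le[OF assms(2,3), of k L T]] assms(2)
    unfolding M_def by (simp add: card_functions)
  also have "\<dots> = M * real (k choose L) * (real (card A choose T) / real (card B) ^ T) ^ L * M ^ k"
    unfolding choose_mult_pow_diff[OF m] M_def[symmetric] choose_mult_pow_split[OF M]
    by (simp only: mult.assoc)
  finally show ?thesis .
qed

text \<open>Union bound for defect (3).\<close>

lemma card_avoiding_sequences_le:
  fixes A :: "'a set" and B :: "'b set"
  defines "P \<equiv> A \<rightarrow>\<^sub>E B"
  assumes "finite A" and "finite B"
  shows "card {w \<in> {..<k} \<rightarrow>\<^sub>E P. \<exists>b\<in>B. \<exists>U. U \<subseteq> A \<and> card U = u \<and> hits k s {c \<in> P. \<forall>a\<in>U. c a \<noteq> b} w}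
    \<le> card B * (card A choose u) * (k choose s)
        * ((card B - 1) ^ u * card B ^ (card A - u)) ^ s * card P ^ (k - s)"
proof -
  let ?Us = "{U. U \<subseteq> A \<and> card U = u}"
  let ?bad = "\<lambda>b U. {w \<in> {..<k} \<rightarrow>\<^sub>E P. hits k s {c \<in> P. \<forall>a\<in>U. c a \<noteq> b} w}"
  define \<gamma> where "\<gamma> = (card B - 1) ^ u * card B ^ (card A - u)"
  have fin: "finite P" unfolding P_def using assms(2,3) by (simp add: finite_PiE)
  have "card {w \<in> {..<k} \<rightarrow>\<^sub>E P. \<exists>b\<in>B. \<exists>U. U \<subseteq> A \<and> card U = u \<and>
            hits k s {c \<in> P. \<forall>a\<in>U. c a \<noteq> b} w} = card (\<Union>b\<in>B. \<Union>U\<in>?Us. ?bad b U)"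
    by (rule arg_cong[where f = card]) auto
  also have "\<dots> \<le> (\<Sum>b\<in>B. card (\<Union>U\<in>?Us. ?bad b U))"
    by (rule card_UN_le[OF assms(3)])
  also have "\<dots> \<le> (\<Sum>b\<in>B. \<Sum>U\<in>?Us. card (?bad b U))"
    using assms(2) by (intro sum_mono card_UN_le) simp
  also have "\<dots> \<le> (\<Sum>b\<in>B. \<Sum>U\<in>?Us. (k choose s) * \<gamma> ^ s * card P ^ (k - s))"
  proof (intro sum_mono)
    fix b U assume "b \<in> B" and "U \<in> ?Us"
    then have "card {c \<in> P. \<forall>a\<in>U. c a \<noteq> b} = \<gamma>"
      unfolding \<gamma>_def P_def using card_avoiding[OF assms(2,3)] by auto
    then show "card (?bad b U) \<le> (k choose s) * \<gamma> ^ s * card P ^ (k - s)"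
      using card_hits_le[OF fin, of "{c \<in> P. \<forall>a\<in>U. c a \<noteq> b}" k s] by auto
  qed
  also have "\<dots> = card B * (card A choose u) * (k choose s) * \<gamma> ^ s * card P ^ (k - s)"
    using assms(2) by (simp add: n_subsets)
  finally show ?thesis unfolding \<gamma>_def .
qed

lemma avoiding_sequences_fraction:
  fixes A :: "'a set" and B :: "'b set"
  defines "M \<equiv> real (card B) ^ card A"
  assumes "finite A" and "finite B" and "B \<noteq> {}"
  shows "real (card {w \<in> {..<k} \<rightarrow>\<^sub>E (A \<rightarrow>\<^sub>E B). \<exists>b\<in>B. \<exists>U. U \<subseteq> A \<and> card U = u \<and>
            hits k s {c \<in> A \<rightarrow>\<^sub>E B. \<forall>a\<in>U. c a \<noteq> b} w})
    \<le> real (card B) * real (card A choose u) * real (k choose s)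
        * ((real (card B) - 1) / real (card B)) ^ (u * s) * M ^ k"
proof (cases "u \<le> card A")
  case True
  define y where "y = (real (card B) - 1) / real (card B)"
  have m: "1 \<le> card B" using assms(3,4) by (simp add: Suc_le_eq card_gt_0_iff)
  then have M: "M \<noteq> 0" unfolding M_def by simp
  have "real (card B - 1) ^ u * real (card B) ^ (card A - u) = (real (card B) - 1) ^ u * real (card B) ^ (card A - u)"
    using m by (simp add: of_nat_diff)
  also have "\<dots> = y ^ u * M" using True m unfolding M_def y_def by (simp add: power_diff power_divide)
  finally have \<gamma>: "real (card B - 1) ^ u * real (card B) ^ (card A - u) = y ^ u * M" .
  have "real (card {w \<in> {..<k} \<rightarrow>\<^sub>E (A \<rightarrow>\<^sub>E B). \<exists>b\<in>B. \<exists>U. U \<subseteq> A \<and> card U = u \<and>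
            hits k s {c \<in> A \<rightarrow>\<^sub>E B. \<forall>a\<in>U. c a \<noteq> b} w})
      \<le> real (card B * (card A choose u) * (k choose s)
        * ((card B - 1) ^ u * card B ^ (card A - u)) ^ s * card (A \<rightarrow>\<^sub>E B) ^ (k - s))"
    by (rule of_nat_mono[OF card_avoiding_sequences_le[OF assms(2,3)]])
  also have "\<dots> = real (card B) * real (card A choose u) * (real (k choose s) * (y ^ u * M) ^ s * M ^ (k - s))"
    unfolding M_def by (simp only: of_nat_mult of_nat_power \<gamma>[unfolded M_def] card_functions[OF assms(2)] mult.assoc)
  also have "\<dots> = real (card B) * real (card A choose u) * real (k choose s) * y ^ (u * s) * M ^ k"
    unfolding choose_mult_pow_split[OF M] by (simp only: power_mult mult.assoc)
  finally show ?thesis unfolding y_def .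
qed (use card_avoiding_sequences_le[OF assms(2,3), of k u s] in \<open>simp add: binomial_eq_0\<close>)

lemma card_non_injective_sequences_le:
  fixes A :: "'a set" and B :: "'b set"
  defines "M \<equiv> real (card B) ^ card A"
  assumes "finite A" and "finite B" and "4 * (real k * real k) \<le> M"
  shows "real (card {w \<in> {..<k} \<rightarrow>\<^sub>E (A \<rightarrow>\<^sub>E B). \<not> inj_on w {..<k}}) \<le> M ^ k / 4"
proof (cases k)
  case (Suc j)
  have "real (card {w \<in> {..<k} \<rightarrow>\<^sub>E (A \<rightarrow>\<^sub>E B). \<not> inj_on w {..<k}})
      \<le> real (k * k * card (A \<rightarrow>\<^sub>E B) ^ (k - 1))"
    using assms(2,3) by (intro of_nat_mono card_non_injective_le) (simp add: finite_PiE)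
  also have "\<dots> = real k * real k * M ^ j"
    using Suc by (simp only: of_nat_mult of_nat_power card_functions[OF assms(2)] M_def) simp
  also have "\<dots> \<le> M / 4 * M ^ j"
    using assms(4) by (intro mult_right_mono) (auto simp: M_def)
  finally show ?thesis using Suc by (simp add: mult.commute)
qed simp

lemma exists_outside_small_subsets:
  fixes \<Omega> X Y Z :: "'x set"
  assumes "finite \<Omega>" and "\<Omega> \<noteq> {}" and "X \<union> Y \<union> Z \<subseteq> \<Omega>"
    and "real (card X) \<le> real (card \<Omega>) / 4" and "real (card Y) \<le> real (card \<Omega>) / 4"
    and "real (card Z) \<le> real (card \<Omega>) / 4"
  obtains w where "w \<in> \<Omega>" and "w \<notin> X" and "w \<notin> Y" and "w \<notin> Z"
proof -
  have "card (X \<union> Y \<union> Z) \<le> card X + card Y + card Z"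
    using card_Un_le[of "X \<union> Y" Z] card_Un_le[of X Y] by linarith
  then have "real (card (X \<union> Y \<union> Z)) \<le> real (card X) + real (card Y) + real (card Z)"
    by (simp flip: of_nat_add)
  moreover have "0 < real (card \<Omega>)" using assms(1,2) by (simp add: card_gt_0_iff)
  ultimately have "card (X \<union> Y \<union> Z) < card \<Omega>" using assms(4-6) by simp
  then have "X \<union> Y \<union> Z \<noteq> \<Omega>" by blast
  then show ?thesis using assms(3) that by blast
qed

lemma exists_good_sequence:
  fixes A :: "'a set" and B :: "'b set"
  defines "M \<equiv> real (card B) ^ card A"
  assumes "finite A" and "finite B" and "B \<noteq> {}"
    and "4 * (real k * real k) \<le> M"
    and "M * real (k choose L) * (real (card A choose T) / real (card B) ^ T) ^ L \<le> 1 / 4"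
    and "real (card B) * real (card A choose u) * real (k choose s)
           * ((real (card B) - 1) / real (card B)) ^ (u * s) \<le> 1 / 4"
  obtains w where "w \<in> {..<k} \<rightarrow>\<^sub>E (A \<rightarrow>\<^sub>E B)" and "inj_on w {..<k}"
    and "\<forall>f\<in>A \<rightarrow>\<^sub>E B. \<not> hits k L (agreeing A B T f) w"
    and "\<forall>b\<in>B. \<forall>U. U \<subseteq> A \<longrightarrow> card U = u \<longrightarrow> \<not> hits k s {c \<in> A \<rightarrow>\<^sub>E B. \<forall>a\<in>U. c a \<noteq> b} w"
proof -
  define \<Omega> where "\<Omega> = {..<k} \<rightarrow>\<^sub>E (A \<rightarrow>\<^sub>E B)"
  define collide where "collide = {w \<in> \<Omega>. \<not> inj_on w {..<k}}"
  define agree where "agree = {w \<in> \<Omega>. \<exists>f\<in>A \<rightarrow>\<^sub>E B. hits k L (agreeing A B T f) w}"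
  define avoid where "avoid = {w \<in> \<Omega>. \<exists>b\<in>B. \<exists>U. U \<subseteq> A \<and> card U = u \<and>
                                 hits k s {c \<in> A \<rightarrow>\<^sub>E B. \<forall>a\<in>U. c a \<noteq> b} w}"
  have "0 < M" using assms(3,4) unfolding M_def by (simp add: card_gt_0_iff)
  have card_\<Omega>: "real (card \<Omega>) = M ^ k"
    unfolding \<Omega>_def M_def using assms(2) by (simp add: card_functions)
  have collide: "real (card collide) \<le> real (card \<Omega>) / 4"
    unfolding card_\<Omega> unfolding collide_def \<Omega>_def M_def
    by (rule card_non_injective_sequences_le[OF assms(2,3,5)[unfolded M_def]])
  have "real (card agree) \<le> M * real (k choose L) * (real (card A choose T) / real (card B) ^ T) ^ L * M ^ k"
    unfolding agree_def \<Omega>_def M_def by (rule agreeing_sequences_fraction[OF assms(2-4)])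
  also have "\<dots> \<le> 1 / 4 * M ^ k" by (rule mult_right_mono[OF assms(6)]) (use \<open>0 < M\<close> in simp)
  finally have agree: "real (card agree) \<le> real (card \<Omega>) / 4" unfolding card_\<Omega> by simp
  have "real (card avoid) \<le> real (card B) * real (card A choose u) * real (k choose s)
           * ((real (card B) - 1) / real (card B)) ^ (u * s) * M ^ k"
    unfolding avoid_def \<Omega>_def M_def by (rule avoiding_sequences_fraction[OF assms(2-4)])
  also have "\<dots> \<le> 1 / 4 * M ^ k" by (rule mult_right_mono[OF assms(7)]) (use \<open>0 < M\<close> in simp)
  finally have avoid: "real (card avoid) \<le> real (card \<Omega>) / 4" unfolding card_\<Omega> by simp
  have "0 < real (card \<Omega>)" unfolding card_\<Omega> using \<open>0 < M\<close> by simp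
  then have "finite \<Omega>" "\<Omega> \<noteq> {}" by (auto intro: card_ge_0_finite)
  moreover have "collide \<union> agree \<union> avoid \<subseteq> \<Omega>" unfolding collide_def agree_def avoid_def by blast
  ultimately obtain w where w: "w \<in> \<Omega>" "w \<notin> collide" "w \<notin> agree" "w \<notin> avoid"
    using exists_outside_small_subsets collide agree avoid by metis
  show ?thesis
  proof (rule that)
    show "w \<in> {..<k} \<rightarrow>\<^sub>E (A \<rightarrow>\<^sub>E B)" using w(1) unfolding \<Omega>_def .
    show "inj_on w {..<k}" using w unfolding collide_def by blast
    show "\<forall>f\<in>A \<rightarrow>\<^sub>E B. \<not> hits k L (agreeing A B T f) w" using w unfolding agree_def by blast
    show "\<forall>b\<in>B. \<forall>U. U \<subseteq> A \<longrightarrow> card U = u \<longrightarrow> \<not> hits k s {c \<in> A \<rightarrow>\<^sub>E B. \<forall>a\<in>U. c a \<noteq> b} w"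
      using w unfolding avoid_def by blast
  qed
qed

lemma exists_good_family:
  fixes A :: "'a set" and B :: "'b set"
  defines "M \<equiv> real (card B) ^ card A"
  assumes "finite A" and "finite B" and "B \<noteq> {}"
    and "4 * (real k * real k) \<le> M"
    and "M * real (k choose L) * (real (card A choose T) / real (card B) ^ T) ^ L \<le> 1 / 4"
    and "real (card B) * real (card A choose u) * real (k choose s)
           * ((real (card B) - 1) / real (card B)) ^ (u * s) \<le> 1 / 4"
  obtains C where "C \<subseteq> A \<rightarrow>\<^sub>E B" and "card C = k"
    and "\<forall>f\<in>A \<rightarrow>\<^sub>E B. card (C \<inter> agreeing A B T f) < L"
    and "\<forall>b\<in>B. \<forall>U. U \<subseteq> A \<longrightarrow> card U = u \<longrightarrow> card {c \<in> C. \<forall>a\<in>U. c a \<noteq> b} < s"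
proof -
  obtain w where w: "w \<in> {..<k} \<rightarrow>\<^sub>E (A \<rightarrow>\<^sub>E B)" "inj_on w {..<k}"
    and rare: "\<forall>f\<in>A \<rightarrow>\<^sub>E B. \<not> hits k L (agreeing A B T f) w"
    and avoid: "\<forall>b\<in>B. \<forall>U. U \<subseteq> A \<longrightarrow> card U = u \<longrightarrow> \<not> hits k s {c \<in> A \<rightarrow>\<^sub>E B. \<forall>a\<in>U. c a \<noteq> b} w"
    by (rule exists_good_sequence[OF assms(2-7)[unfolded M_def]])
  define C where "C = w ` {..<k}"
  show ?thesis
  proof (rule that)
    show "C \<subseteq> A \<rightarrow>\<^sub>E B" and "card C = k" using w unfolding C_def by (auto simp: card_image)
    show "\<forall>f\<in>A \<rightarrow>\<^sub>E B. card (C \<inter> agreeing A B T f) < L"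
      using rare card_image_inter_lt_if_not_hits[OF w(2)] unfolding C_def by blast
    show "\<forall>b\<in>B. \<forall>U. U \<subseteq> A \<longrightarrow> card U = u \<longrightarrow> card {c \<in> C. \<forall>a\<in>U. c a \<noteq> b} < s"
    proof (intro ballI allI impI)
      fix b U assume "b \<in> B" "U \<subseteq> A" "card U = u"
      then have "card (C \<inter> {c \<in> A \<rightarrow>\<^sub>E B. \<forall>a\<in>U. c a \<noteq> b}) < s"
        using avoid card_image_inter_lt_if_not_hits[OF w(2)] unfolding C_def by blast
      moreover have "C \<inter> {c \<in> A \<rightarrow>\<^sub>E B. \<forall>a\<in>U. c a \<noteq> b} = {c \<in> C. \<forall>a\<in>U. c a \<noteq> b}"
        using \<open>C \<subseteq> A \<rightarrow>\<^sub>E B\<close> by blast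
      ultimately show "card {c \<in> C. \<forall>a\<in>U. c a \<noteq> b} < s" by simp
    qed
  qed
qed

subsection \<open>Analytic estimates\<close>

lemma pow_div_fact_le_exp:
  fixes x :: real
  assumes "0 \<le> x"
  shows "x ^ j / fact j \<le> exp x"
proof -
  have exp: "(\<lambda>i. x ^ i / fact i) sums exp x"
    using exp_converges[of x] by (simp add: divide_inverse mult.commute)
  have "(\<Sum>i\<in>{j}. x ^ i / fact i) \<le> (\<Sum>i. x ^ i / fact i)"
    by (rule sum_le_suminf) (use exp assms in \<open>auto simp: sums_iff\<close>)
  then show ?thesis using exp by (simp add: sums_iff)
qed

lemma four_le_exp_two: "(4::real) \<le> exp 2"
  using exp_lower_Taylor_quadratic[of "2::real"] by simp

lemma choose_le_exp_ratio_pow: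
  assumes "0 < r"
  shows "real (N choose r) \<le> (exp 1 * real N / real r) ^ r"
proof -
  have "real (N choose r) * fact r \<le> real N ^ r"
    using binomial_fact_pow[of N r] by (metis of_nat_fact of_nat_le_iff of_nat_mult of_nat_power)
  then have "real (N choose r) \<le> real N ^ r / fact r" by (simp add: field_simps)
  also have "\<dots> \<le> real N ^ r * (exp 1 ^ r / real r ^ r)"
  proof -
    have "real r ^ r / fact r \<le> exp 1 ^ r"
      using pow_div_fact_le_exp[of "real r" r] exp_of_nat_mult[of r "1::real"] by simp
    then have "1 / fact r \<le> exp 1 ^ r / real r ^ r" using assms by (simp add: field_simps)
    then show ?thesis by (simp add: divide_inverse mult_left_mono)
  qed
  also have "\<dots> = (exp 1 * real N / real r) ^ r" by (simp add: power_mult_distrib power_divide)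
  finally show ?thesis .
qed

lemma choose_le_exp_mult_pow:
  fixes a :: real
  assumes "1 \<le> L" and "real k \<le> a * real L"
  shows "real (k choose L) \<le> (exp 1 * a) ^ L"
proof -
  have "real (k choose L) \<le> (exp 1 * real k / real L) ^ L"
    using assms(1) by (intro choose_le_exp_ratio_pow) simp
  also have "\<dots> \<le> (exp 1 * a) ^ L"
    using assms by (intro power_mono) (simp_all add: divide_le_eq mult_left_mono mult.commute)
  finally show ?thesis .
qed

lemma choose_le_four_pow:
  assumes "k \<le> 2 * s"
  shows "real (k choose s) \<le> 4 ^ s"
proof -
  have "real (k choose s) \<le> 2 ^ k"
    using binomial_le_pow2[of k s] by (metis of_nat_le_iff of_nat_numeral of_nat_power)
  also have "\<dots> \<le> 2 ^ (2 * s)" using assms by (intro power_increasing) auto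
  finally show ?thesis by (simp add: power_mult)
qed

text \<open>A polynomial-versus-exponential inequality needed for the collision estimate.\<close>

lemma square_le_exp:
  fixes w :: real
  assumes "64 / 3 \<le> w"
  shows "324 * w\<^sup>2 \<le> exp (3 * w / 4)"
proof -
  have "324 * 3628800 * (4 / 3 :: real) ^ 10 \<le> (64 / 3) ^ 8" by (simp add: power_divide)
  also have "\<dots> \<le> w ^ 8" using assms by (intro power_mono) auto
  finally have "324 * 3628800 * (4 / 3) ^ 10 * w\<^sup>2 \<le> w ^ 8 * w\<^sup>2" by (rule mult_right_mono) simp
  then have "324 * w\<^sup>2 \<le> (3 * w / 4) ^ 10 / fact 10"
    by (simp add: power_divide power_mult_distrib fact_numeral field_simps flip: power_add)
  also have "\<dots> \<le> exp (3 * w / 4)" by (rule pow_div_fact_le_exp) (use assms in simp)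
  finally show ?thesis .
qed

text \<open>The quantity n * ln m, i.e. ln of the number of functions, is large.\<close>

lemma exponent_ge:
  assumes "2 \<le> m" and "32 \<le> n"
  shows "64 / 3 \<le> real n * ln (real m)"
proof -
  have "ln 2 \<le> ln (real m)" using assms(1) by simp
  then have "2 / 3 \<le> ln (real m)" using ln2_ge_two_thirds by linarith
  then have "32 * (2 / 3) \<le> real n * ln (real m)" using assms by (intro mult_mono) auto
  then show ?thesis by simp
qed

lemma ln_le_log2:
  fixes x :: real
  assumes "1 \<le> x"
  shows "ln x \<le> log 2 x"
  using assms ln_2_less_1 ln2_ge_two_thirds by (simp add: log_def field_simps mult_left_le)

text \<open>Defect (1) is rare: 4 k^2 <= m^n.  Here k <= 9 Phi n ln m and Phi^2 <= exp(n ln m / 4).\<close>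

lemma few_collisions_bound:
  fixes n m k :: nat and \<Phi> :: real
  assumes m: "2 \<le> m" and n: "16 * m \<le> n"
    and \<Phi>: "1 \<le> \<Phi>" "\<Phi> \<le> 2 powr (real n / (4 * real m))"
    and k: "real k \<le> 5 * \<Phi> * log 2 (real m) * real n + 1"
  shows "4 * (real k * real k) \<le> real m ^ n"
proof -
  define w where "w = real n * ln (real m)"
  have ln2: "2 / 3 \<le> ln (2::real)" "ln 2 \<le> ln (real m)" using ln2_ge_two_thirds m by auto
  have w: "64 / 3 \<le> w" unfolding w_def using m n by (intro exponent_ge) auto
  have "log 2 (real m) * real n = w / ln 2" unfolding w_def log_def by simp
  also have "\<dots> \<le> 3 / 2 * w" using ln2(1) w by (simp add: field_simps)
  finally have lw: "log 2 (real m) * real n \<le> 3 / 2 * w" .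
  have "1 * 1 \<le> log 2 (real m) * real n" using m n by (intro mult_mono) auto
  then have "1 * 1 \<le> \<Phi> * (log 2 (real m) * real n)" using \<Phi>(1) by (intro mult_mono) auto
  then have "real k \<le> 6 * \<Phi> * (log 2 (real m) * real n)" using k by (simp add: mult_ac)
  also have "\<dots> \<le> 6 * \<Phi> * (3 / 2 * w)" using lw \<Phi>(1) by (intro mult_left_mono) auto
  finally have k9: "real k \<le> 9 * \<Phi> * w" by simp
  have "\<Phi> \<le> exp (ln 2 * (real n / (4 * real m)))" using \<Phi>(2) by (simp add: powr_def mult.commute)
  also have "\<dots> \<le> exp (w / 8)"
  proof -
    have "real n / (4 * real m) \<le> real n / 8" using m by (intro divide_left_mono) auto
    then have "ln 2 * (real n / (4 * real m)) \<le> ln (real m) * (real n / 8)"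
      using ln2 by (intro mult_mono) auto
    moreover have "ln (real m) * (real n / 8) = w / 8" unfolding w_def by simp
    ultimately show ?thesis by simp
  qed
  finally have "\<Phi>\<^sup>2 \<le> exp (w / 8) ^ 2" using \<Phi>(1) by (intro power_mono) auto
  then have \<Phi>2: "\<Phi>\<^sup>2 \<le> exp (w / 4)" by (simp flip: exp_of_nat_mult)
  have "4 * (real k * real k) \<le> 4 * ((9 * \<Phi> * w) * (9 * \<Phi> * w))"
    using k9 by (intro mult_left_mono mult_mono) auto
  also have "\<dots> = 324 * w\<^sup>2 * \<Phi>\<^sup>2" by (simp add: power2_eq_square)
  also have "\<dots> \<le> exp (3 * w / 4) * exp (w / 4)"
    using square_le_exp[OF w] \<Phi>2 by (intro mult_mono) auto
  also have "\<dots> = exp w" by (simp flip: exp_add)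
  also have "\<dots> = real m ^ n" using m unfolding w_def by (simp add: exp_of_nat_mult)
  finally show ?thesis .
qed

lemma agreement_ratio_le:
  assumes "0 < m" and "0 < n" and T: "4 * real n / real m \<le> real T"
  shows "real (n choose T) / real m ^ T \<le> exp (- 4 / 3 * (real n / real m))"
proof -
  define z where "z = real n / real m"
  have z: "0 < z" "4 * z \<le> real T" using assms unfolding z_def by auto
  then have "0 < T" by linarith
  have "real (n choose T) / real m ^ T \<le> (exp 1 * real n / real T) ^ T / real m ^ T"
    using choose_le_exp_ratio_pow[OF \<open>0 < T\<close>] by (intro divide_right_mono) auto
  also have "\<dots> = (exp 1 * z / real T) ^ T"
    unfolding z_def using assms(1) by (simp add: power_divide power_mult_distrib)
  also have "\<dots> \<le> (exp 1 / 4) ^ T"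
    using z by (intro power_mono) (auto simp: field_simps mult_left_mono)
  also have "\<dots> \<le> exp (- 1 / 3) ^ T"
  proof (intro power_mono)
    have "exp (2 * ln 2) = (4::real)" using exp_add[of "ln 2" "ln (2::real)"] by simp
    then have "exp 1 / 4 = exp (1 - 2 * ln (2::real))" by (simp add: exp_diff)
    also have "\<dots> \<le> exp (- 1 / 3)" using ln2_ge_two_thirds by simp
    finally show "exp 1 / 4 \<le> exp (- 1 / (3::real))" .
  qed simp
  also have "\<dots> = exp (- real T / 3)" by (simp flip: exp_of_nat_mult)
  also have "\<dots> \<le> exp (- 4 / 3 * z)" using z by simp
  finally show ?thesis unfolding z_def .
qed

text \<open>With z = n/m >= 16 and Phi <= 2^(z/4), the factor e * 4 Phi contributed by choosing L of
  the k <= 4 Phi L positions is absorbed by the agreement probability exp(-4z/3).\<close>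

lemma agreement_factor_le:
  fixes z \<Phi> :: real
  assumes z: "16 \<le> z" and \<Phi>: "\<Phi> \<le> exp (ln 2 * z / 4)"
  shows "exp 1 * (4 * \<Phi>) * exp (- 4 / 3 * z) \<le> exp (- 3 / 4 * z)"
proof -
  have "exp (2 * ln 2) = (4::real)" using exp_add[of "ln 2" "ln (2::real)"] by simp
  then have "exp 1 * (4 * \<Phi>) * exp (- 4 / 3 * z)
      \<le> exp 1 * (exp (2 * ln 2) * exp (ln 2 * z / 4)) * exp (- 4 / 3 * z)"
    using \<Phi> by simp
  also have "\<dots> = exp (1 + 2 * ln 2 + ln 2 * z / 4 + - 4 / 3 * z)"
    by (simp only: exp_add mult.assoc)
  also have "\<dots> \<le> exp (- 3 / 4 * z)"
  proof -
    have "ln 2 * z \<le> 1 * z" using ln_2_less_1 z by (intro mult_right_mono) auto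
    then have "1 + 2 * ln 2 + ln 2 * z / 4 + - 4 / 3 * z \<le> - 3 / 4 * z"
      using ln_2_less_1 z by linarith
    then show ?thesis by (simp only: exp_le_cancel_iff)
  qed
  finally show ?thesis .
qed

lemma agreement_bound:
  fixes n m k L T :: nat and \<Phi> :: real
  assumes m: "2 \<le> m" and n: "16 * m \<le> n"
    and \<Phi>: "1 \<le> \<Phi>" "\<Phi> \<le> 2 powr (real n / (4 * real m))"
    and L: "1 \<le> L" "real k \<le> 4 * \<Phi> * real L" "3 / 2 * real m * log 2 (real m) \<le> real L"
    and T: "4 * real n / real m \<le> real T"
  shows "real m ^ n * real (k choose L) * (real (n choose T) / real m ^ T) ^ L \<le> 1 / 4"
proof -
  define z where "z = real n / real m"
  define w where "w = real n * ln (real m)"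
  have z: "16 \<le> z" using m n unfolding z_def by (simp add: field_simps)
  have ratio: "real (n choose T) / real m ^ T \<le> exp (- 4 / 3 * z)"
    unfolding z_def using m n by (intro agreement_ratio_le[OF _ _ T]) auto
  have "\<Phi> \<le> exp (ln 2 * z / 4)" using \<Phi>(2) unfolding z_def by (simp add: powr_def field_simps)
  then have base: "exp 1 * (4 * \<Phi>) * exp (- 4 / 3 * z) \<le> exp (- 3 / 4 * z)"
    by (rule agreement_factor_le[OF z])
  have "real (k choose L) * (real (n choose T) / real m ^ T) ^ L
      \<le> (exp 1 * (4 * \<Phi>)) ^ L * exp (- 4 / 3 * z) ^ L"
    using choose_le_exp_mult_pow[OF L(1,2)] ratio by (intro mult_mono power_mono) auto
  also have "\<dots> \<le> exp (- 3 / 4 * z) ^ L"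
    using base \<Phi>(1) by (simp flip: power_mult_distrib add: power_mono)
  also have "\<dots> = exp (- 3 / 4 * z * real L)" by (simp flip: exp_of_nat_mult add: mult.commute)
  finally have small: "real (k choose L) * (real (n choose T) / real m ^ T) ^ L \<le> exp (- 3 / 4 * z * real L)" .
  have "9 / 8 * w \<le> 3 / 4 * z * real L"
  proof -
    have "ln (real m) \<le> log 2 (real m)" using m by (intro ln_le_log2) simp
    then have "w \<le> real n * log 2 (real m)" unfolding w_def by (intro mult_left_mono) auto
    moreover have "3 / 4 * z * (3 / 2 * real m * log 2 (real m)) = 9 / 8 * (real n * log 2 (real m))"
      using m unfolding z_def by (simp add: field_simps)
    ultimately have "9 / 8 * w \<le> 3 / 4 * z * (3 / 2 * real m * log 2 (real m))" by linarith
    also have "\<dots> \<le> 3 / 4 * z * real L" using L(3) z by (intro mult_left_mono) auto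
    finally show ?thesis .
  qed
  moreover have "64 / 3 \<le> w" unfolding w_def using m n by (intro exponent_ge) auto
  ultimately have "w - 3 / 4 * z * real L \<le> - 2" by linarith
  have "real m ^ n * real (k choose L) * (real (n choose T) / real m ^ T) ^ L
      \<le> exp w * exp (- 3 / 4 * z * real L)"
    using small m unfolding w_def by (simp add: exp_of_nat_mult mult.assoc mult_left_mono)
  also have "\<dots> \<le> exp (- 2)"
    using \<open>w - 3 / 4 * z * real L \<le> - 2\<close> by (simp flip: exp_add)
  also have "\<dots> \<le> 1 / 4" using four_le_exp_two by (simp add: exp_minus field_simps)
  finally show ?thesis .
qed

lemma choose_le_exp_div:
  fixes \<epsilon> :: real
  assumes "0 < \<epsilon>" and u: "\<epsilon> * real n < real u"
  shows "real (n choose u) \<le> exp (real u / \<epsilon>)"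
proof -
  have "0 \<le> \<epsilon> * real n" using assms(1) by simp
  then have "0 < real u" using u by linarith
  then have "real (n choose u) \<le> (exp 1 * real n / real u) ^ u"
    by (intro choose_le_exp_ratio_pow) simp
  also have "\<dots> \<le> (exp 1 * (1 / \<epsilon>)) ^ u"
    using assms \<open>0 < real u\<close> by (intro power_mono) (auto simp: field_simps)
  also have "\<dots> \<le> exp (1 / \<epsilon>) ^ u"
  proof (intro power_mono)
    have "1 / \<epsilon> \<le> exp (1 / \<epsilon> - 1)"
      using exp_ge_add_one_self[of "1 / \<epsilon> - 1"] by simp
    then show "exp 1 * (1 / \<epsilon>) \<le> exp (1 / \<epsilon>)"
      by (simp add: exp_diff field_simps)
  qed (use assms in simp)
  also have "\<dots> = exp (real u / \<epsilon>)" by (simp flip: exp_of_nat_mult)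
  finally show ?thesis .
qed

lemma avoidance_bound:
  fixes n m k u s :: nat and \<epsilon> :: real
  assumes m: "2 \<le> m" and n: "16 * m \<le> n" and \<epsilon>: "4 * real m / real n \<le> \<epsilon>"
    and u: "\<epsilon> * real n < real u" and k: "k \<le> 2 * s" and s: "10 * real m / \<epsilon> \<le> real s"
  shows "real m * real (n choose u) * real (k choose s) * ((real m - 1) / real m) ^ (u * s) \<le> 1 / 4"
proof -
  have "0 < 4 * real m / real n" using m n by simp
  then have "0 < \<epsilon>" using \<epsilon> by linarith
  have "(4::real) ^ s \<le> exp 2 ^ s" using four_le_exp_two by (intro power_mono) auto
  then have "real (k choose s) \<le> exp 2 ^ s" using choose_le_four_pow[OF k] by linarith
  then have ks: "real (k choose s) \<le> exp (2 * real s)" by (simp flip: exp_of_nat_mult add: mult.commute)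
  have "(real m - 1) / real m \<le> exp (- (1 / real m))"
    using exp_ge_add_one_self[of "- (1 / real m)"] m by (simp add: field_simps)
  then have "((real m - 1) / real m) ^ (u * s) \<le> exp (- (1 / real m)) ^ (u * s)"
    using m by (intro power_mono) auto
  also have "\<dots> = exp (- (real u * real s / real m))" by (simp flip: exp_of_nat_mult)
  finally have avoid: "((real m - 1) / real m) ^ (u * s) \<le> exp (- (real u * real s / real m))" .
  \<comment> \<open>the exponent: u s / m dominates both u / \<epsilon> and 2 s by the choice of u and s\<close>
  have "4 * real m \<le> \<epsilon> * real n" using \<epsilon> m n by (simp add: divide_le_eq mult.commute)
  then have "2 \<le> real u / (2 * real m)" using u m by (simp add: field_simps)
  then have "2 * real s \<le> real u / (2 * real m) * real s" by (intro mult_right_mono) auto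
  moreover have "5 / \<epsilon> \<le> real s / (2 * real m)"
    using s m \<open>0 < \<epsilon>\<close> by (simp add: field_simps)
  then have "5 / \<epsilon> * real u \<le> real s / (2 * real m) * real u" by (intro mult_right_mono) auto
  moreover have "real u * real s / real m = real u / (2 * real m) * real s + real s / (2 * real m) * real u"
    using m by (simp add: field_simps)
  moreover have "real n < real u / \<epsilon>" using u \<open>0 < \<epsilon>\<close> by (simp add: field_simps)
  moreover have "5 / \<epsilon> * real u = 5 * (real u / \<epsilon>)" by simp
  ultimately have exponent: "real u / \<epsilon> + 2 * real s - real u * real s / real m \<le> - 4 * real n"
    by linarith
  have "real m * real (n choose u) * real (k choose s) * ((real m - 1) / real m) ^ (u * s)
      \<le> real m * exp (real u / \<epsilon>) * exp (2 * real s) * exp (- (real u * real s / real m))"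
    using choose_le_exp_div[OF \<open>0 < \<epsilon>\<close> u] ks avoid m by (intro mult_mono) auto
  also have "\<dots> = real m * exp (real u / \<epsilon> + 2 * real s - real u * real s / real m)"
    by (simp add: exp_add exp_diff exp_minus divide_inverse)
  also have "\<dots> \<le> exp (real m) * exp (- 4 * real n)"
  proof (rule mult_mono)
    show "real m \<le> exp (real m)" using exp_ge_add_one_self[of "real m"] by linarith
  qed (use exponent in auto)
  also have "\<dots> \<le> exp (- 2)" using m n by (simp flip: exp_add)
  also have "\<dots> \<le> 1 / 4" using four_le_exp_two by (simp add: exp_minus field_simps)
  finally show ?thesis .
qed

subsection \<open>Choice of the parameters\<close>

lemma family_size_le:
  fixes n m :: nat and \<epsilon> \<Phi> :: real
  assumes m: "2 \<le> m" and n: "16 * m \<le> n" and \<epsilon>: "4 * real m / real n \<le> \<epsilon>" and \<Phi>: "1 \<le> \<Phi>"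
  shows "max (20 * real m / \<epsilon>) (max (6 * \<Phi> * log 2 (real m) / \<epsilon>) (6 * \<Phi> * real m * log 2 (real m)))
           \<le> 5 * \<Phi> * log 2 (real m) * real n"
proof -
  define l where "l = log 2 (real m)"
  have l: "1 \<le> l" unfolding l_def using m by simp
  have "0 < 4 * real m / real n" using m n by simp
  then have "inverse \<epsilon> \<le> inverse (4 * real m / real n)" by (rule le_imp_inverse_le[OF \<epsilon>])
  then have inv\<epsilon>: "1 / \<epsilon> \<le> real n / (4 * real m)" by (simp add: inverse_eq_divide)
  have \<Phi>l: "1 \<le> \<Phi> * l" using \<Phi> l by (metis mult_mono' mult_1 zero_le_one)
  define p where "p = \<Phi> * l * real n"
  have "1 * real n \<le> \<Phi> * l * real n" using \<Phi>l by (intro mult_right_mono) auto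
  then have p: "real n \<le> p" unfolding p_def by simp
  have "20 * real m / \<epsilon> \<le> 20 * real m * (real n / (4 * real m))"
    using mult_left_mono[OF inv\<epsilon>, of "20 * real m"] by simp
  also have "\<dots> = 5 * real n" using m by simp
  finally have t1: "20 * real m / \<epsilon> \<le> 5 * p" using p by linarith
  have "6 * \<Phi> * l / \<epsilon> \<le> 6 * (\<Phi> * l) * (real n / (4 * real m))"
    using mult_left_mono[OF inv\<epsilon>, of "6 * (\<Phi> * l)"] \<Phi>l by simp
  also have "\<dots> \<le> 6 * (\<Phi> * l) * (real n / 8)"
    using m \<Phi>l by (intro mult_left_mono divide_left_mono) auto
  also have "\<dots> = 3 / 4 * p" unfolding p_def by simp
  finally have t2: "6 * \<Phi> * l / \<epsilon> \<le> 5 * p" using p by linarith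
  have "6 * \<Phi> * real m * l = 6 * (\<Phi> * l) * real m" by simp
  also have "\<dots> \<le> 6 * (\<Phi> * l) * (real n / 16)" using n \<Phi>l by (intro mult_left_mono) auto
  also have "\<dots> = 3 / 8 * p" unfolding p_def by simp
  finally have t3: "6 * \<Phi> * real m * l \<le> 5 * p" using p by linarith
  have "5 * p = 5 * \<Phi> * log 2 (real m) * real n" unfolding p_def l_def by simp
  then show ?thesis using t1 t2 t3 unfolding l_def by simp
qed

lemma nat_floor_succ_bounds:
  fixes x :: real
  assumes "0 \<le> x"
  shows "x < real (nat \<lfloor>x\<rfloor> + 1)" and "real (nat \<lfloor>x\<rfloor> + 1) \<le> x + 1"
  using assms by linarith+

lemma nat_ceiling_bounds:
  fixes x :: real
  assumes "0 \<le> x"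
  shows "x \<le> real (nat \<lceil>x\<rceil>)" and "real (nat \<lceil>x\<rceil>) < x + 1"
  using assms by linarith+

text \<open>The choice L = floor(k / (4 Phi)) + 1, s = ceil(k / 2), u = floor(eps n) + 1 meets all
  requirements of the estimates and of the covering argument.\<close>

lemma construction_parameters:
  fixes n m k :: nat and \<epsilon> \<Phi> :: real
  assumes m: "2 \<le> m" and n: "16 * m \<le> n" and \<epsilon>: "4 * real m / real n \<le> \<epsilon>" and \<Phi>: "1 \<le> \<Phi>"
    and k: "k = nat \<lceil>max (20 * real m / \<epsilon>)
                    (max (6 * \<Phi> * log 2 (real m) / \<epsilon>) (6 * \<Phi> * real m * log 2 (real m)))\<rceil>"
  obtains L s u
  where "1 \<le> L" and "real k \<le> 4 * \<Phi> * real L" and "\<Phi> * (real L - 1) \<le> real k / 4"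
    and "3 / 2 * real m * log 2 (real m) \<le> real L"
    and "k \<le> 2 * s" and "2 * s \<le> k + 1" and "10 * real m / \<epsilon> \<le> real s"
    and "\<epsilon> * real n < real u" and "real u - 1 \<le> \<epsilon> * real n"
    and "real k \<le> 5 * \<Phi> * log 2 (real m) * real n + 1"
proof -
  define K where "K = max (20 * real m / \<epsilon>)
                    (max (6 * \<Phi> * log 2 (real m) / \<epsilon>) (6 * \<Phi> * real m * log 2 (real m)))"
  have "0 < 4 * real m / real n" using m n by simp
  then have "0 < \<epsilon>" using \<epsilon> by linarith
  have K: "20 * real m / \<epsilon> \<le> K" "6 * \<Phi> * real m * log 2 (real m) \<le> K" unfolding K_def by auto
  moreover have "0 < 20 * real m / \<epsilon>" using m \<open>0 < \<epsilon>\<close> by simp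
  ultimately have k_bounds: "K \<le> real k" "real k < K + 1"
    using nat_ceiling_bounds[of K] unfolding k K_def[symmetric] by auto
  define L where "L = nat \<lfloor>real k / (4 * \<Phi>)\<rfloor> + 1"
  have L: "real k / (4 * \<Phi>) < real L" "real L \<le> real k / (4 * \<Phi>) + 1"
    unfolding L_def using \<Phi> by (intro nat_floor_succ_bounds; simp)+
  define s where "s = nat \<lceil>real k / 2\<rceil>"
  have s: "real k / 2 \<le> real s" "real s < real k / 2 + 1"
    unfolding s_def by (intro nat_ceiling_bounds; simp)+
  define u where "u = nat \<lfloor>\<epsilon> * real n\<rfloor> + 1"
  have u: "\<epsilon> * real n < real u" "real u \<le> \<epsilon> * real n + 1"
    unfolding u_def using \<open>0 < \<epsilon>\<close> by (intro nat_floor_succ_bounds; simp)+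
  show ?thesis
  proof (rule that)
    show "1 \<le> L" unfolding L_def by simp
    show "real k \<le> 4 * \<Phi> * real L" using L(1) \<Phi> by (simp add: field_simps)
    show "\<Phi> * (real L - 1) \<le> real k / 4" using L(2) \<Phi> by (simp add: field_simps)
    have "real k < 4 * \<Phi> * real L" using L(1) \<Phi> by (simp add: field_simps)
    then have "\<Phi> * (6 * real m * log 2 (real m)) \<le> \<Phi> * (4 * real L)"
      using K(2) k_bounds(1) by (simp add: mult_ac)
    then have "6 * real m * log 2 (real m) \<le> 4 * real L" using \<Phi> by simp
    then show "3 / 2 * real m * log 2 (real m) \<le> real L" by simp
    show "k \<le> 2 * s" using s(1) by linarith
    show "2 * s \<le> k + 1" using s(2) by linarith
    show "10 * real m / \<epsilon> \<le> real s" using K(1) k_bounds(1) s(1) by simp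
    show "\<epsilon> * real n < real u" "real u - 1 \<le> \<epsilon> * real n" using u by simp_all
    show "real k \<le> 5 * \<Phi> * log 2 (real m) * real n + 1"
      using family_size_le[OF m n \<epsilon> \<Phi>] k_bounds(2) unfolding K_def[symmetric] by linarith
  qed
qed

theorem mainTheorem7:
  fixes A :: "'a set" and B :: "'b set" and \<epsilon> \<Phi> :: real
  assumes "finite A" and "finite B"
    and "card B \<ge> 2" and "card A \<ge> 16 * card B"
    and "\<epsilon> \<ge> 4 * real (card B) / real (card A)"
    and "1 \<le> \<Phi>" and "\<Phi> \<le> 2 powr (real (card A) / (4 * real (card B)))"
  shows "\<exists>C. C \<subseteq> A \<rightarrow>\<^sub>E B \<and>
     card C = nat \<lceil>max (20 * real (card B) / \<epsilon>)
                   (max (6 * \<Phi> * log 2 (real (card B)) / \<epsilon>)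
                        (6 * \<Phi> * real (card B) * log 2 (real (card B))))\<rceil> \<and>
     (\<forall>F H. F \<subseteq> A \<rightarrow>\<^sub>E B \<longrightarrow> real (card F) \<le> \<Phi> \<longrightarrow>
        (\<forall>b\<in>B. real (card (H b \<inter> C)) \<le> real (card C) / 4) \<longrightarrow>
        real (card {(a, b) \<in> A \<times> B. \<not> (\<exists>c\<in>C. covers A B F H c a b)})
          \<le> \<epsilon> * real (card A) * real (card B))"
proof -
  note finite = assms(1,2) and sizes = assms(3-5) and \<Phi> = assms(6,7)
  define k where "k = nat \<lceil>max (20 * real (card B) / \<epsilon>)
                   (max (6 * \<Phi> * log 2 (real (card B)) / \<epsilon>)
                        (6 * \<Phi> * real (card B) * log 2 (real (card B))))\<rceil>"
  obtain L s u where L: "1 \<le> L" "real k \<le> 4 * \<Phi> * real L" "\<Phi> * (real L - 1) \<le> real k / 4"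
      "3 / 2 * real (card B) * log 2 (real (card B)) \<le> real L"
    and s: "k \<le> 2 * s" "2 * s \<le> k + 1" "10 * real (card B) / \<epsilon> \<le> real s"
    and u: "\<epsilon> * real (card A) < real u" "real u - 1 \<le> \<epsilon> * real (card A)"
    and k: "real k \<le> 5 * \<Phi> * log 2 (real (card B)) * real (card A) + 1"
    using construction_parameters[OF sizes \<Phi>(1) k_def] by blast
  define T where "T = nat \<lceil>4 * real (card A) / real (card B)\<rceil>"
  have T: "4 * real (card A) / real (card B) \<le> real T" unfolding T_def by linarith
  have "B \<noteq> {}" using sizes(1) by auto
  obtain C where C: "C \<subseteq> A \<rightarrow>\<^sub>E B" "card C = k"
    and rare: "\<forall>f\<in>A \<rightarrow>\<^sub>E B. card (C \<inter> agreeing A B T f) < L"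
    and avoid: "\<forall>b\<in>B. \<forall>U. U \<subseteq> A \<longrightarrow> card U = u \<longrightarrow> card {c \<in> C. \<forall>a\<in>U. c a \<noteq> b} < s"
    by (rule exists_good_family[OF finite \<open>B \<noteq> {}\<close> few_collisions_bound[OF sizes(1,2) \<Phi> k]
        agreement_bound[OF sizes(1,2) \<Phi> L(1,2,4) T] avoidance_bound[OF sizes u(1) s(1,3)]])
  show ?thesis
    unfolding k_def[symmetric]
  proof (intro exI[of _ C] conjI allI impI)
    show "C \<subseteq> A \<rightarrow>\<^sub>E B" and "card C = k" by (fact C)+
    fix F H
    assume "F \<subseteq> A \<rightarrow>\<^sub>E B" "real (card F) \<le> \<Phi>" "\<forall>b\<in>B. real (card (H b \<inter> C)) \<le> real (card C) / 4"
    then show "real (card {(a, b) \<in> A \<times> B. \<not> (\<exists>c\<in>C. covers A B F H c a b)})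
        \<le> \<epsilon> * real (card A) * real (card B)"
      using covering_family[OF finite C(1) T_def rare avoid L(1) _ _ u(2)] C(2) L(3) s(2)
      by simp
  qed
qed

end
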